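(* Let $G$ be a group, $a,b\in G$, and let $<$ be a bi-ordering of $G$ with $a>1$. Then $a^{b^2}(a^b)^{-1}a>1$ and $(a^{b^2})^{-1}a^ba^{-1}<1$.
   Context: Notation: $x^y=y^{-1}xy$. A bi-ordering is a strict total order on $G$ invariant under both left and right multiplication. *)

theory Defs
  imports "HOL-Algebra.Group"
begin

definition conjg :: "('a, 'b) monoid_scheme \<Rightarrow> 'a \<Rightarrow> 'a \<Rightarrow> 'a" where
  "conjg G x y = inv\<^bsub>G\<^esub> y \<otimes>\<^bsub>G\<^esub> x \<otimes>\<^bsub>G\<^esub> y"

definition bi_ordering :: "('a, 'b) monoid_scheme \<Rightarrow> ('a \<Rightarrow> 'a \<Rightarrow> bool) \<Rightarrow> bool" where
  "bi_ordering G lt \<longleftrightarrow>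
     (\<forall>x\<in>carrier G. \<not> lt x x) \<and>
     (\<forall>x\<in>carrier G. \<forall>y\<in>carrier G. \<forall>z\<in>carrier G. lt x y \<longrightarrow> lt y z \<longrightarrow> lt x z) \<and>
     (\<forall>x\<in>carrier G. \<forall>y\<in>carrier G. x = y \<or> lt x y \<or> lt y x) \<and>
     (\<forall>x\<in>carrier G. \<forall>y\<in>carrier G. \<forall>z\<in>carrier G.
        lt x y \<longrightarrow> lt (z \<otimes>\<^bsub>G\<^esub> x) (z \<otimes>\<^bsub>G\<^esub> y) \<and> lt (x \<otimes>\<^bsub>G\<^esub> z) (y \<otimes>\<^bsub>G\<^esub> z))"

end

theory Submission
  imports Defs
begin

text \<open>Conjugation by \<open>b\<close> is an order automorphism, so \<open>x = a^b\<close> and \<open>y = x^b = a^{b^2}\<close>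
  are positive and \<open>a < x\<close> forces \<open>x < y\<close>. Comparing \<open>a\<close> with \<open>x\<close> then exhibits both
  \<open>y x\<inverse> a\<close> and \<open>a x\<inverse> y\<close> as products of positive elements (or as \<open>y\<close> itself when
  \<open>x = a\<close>); the second claim is the inverse of \<open>a x\<inverse> y > 1\<close>.\<close>

lemma conjg_one:
  assumes "group G" and "b \<in> carrier G"
  shows "conjg G \<one>\<^bsub>G\<^esub> b = \<one>\<^bsub>G\<^esub>"
proof -
  interpret group G by fact
  show ?thesis using assms(2) unfolding conjg_def by simp
qed

lemma conjg_mult:
  assumes "group G" and "a \<in> carrier G" and "b \<in> carrier G" and "c \<in> carrier G"
  shows "conjg G a (b \<otimes>\<^bsub>G\<^esub> c) = conjg G (conjg G a b) c"
proof -
  interpret group G by fact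
  show ?thesis using assms(2-4) unfolding conjg_def by (simp add: inv_mult_group m_assoc)
qed

locale bi_ordered_group = group G for G (structure) +
  fixes lt :: "'a \<Rightarrow> 'a \<Rightarrow> bool"
  assumes bi_ordering: "bi_ordering G lt"
begin

lemma lt_trans: "\<lbrakk>x \<in> carrier G; y \<in> carrier G; z \<in> carrier G; lt x y; lt y z\<rbrakk> \<Longrightarrow> lt x z"
  using bi_ordering unfolding bi_ordering_def by blast

lemma lt_trichotomy: "\<lbrakk>x \<in> carrier G; y \<in> carrier G\<rbrakk> \<Longrightarrow> x = y \<or> lt x y \<or> lt y x"
  using bi_ordering unfolding bi_ordering_def by blast

lemma lt_mult_left: "\<lbrakk>x \<in> carrier G; y \<in> carrier G; z \<in> carrier G; lt x y\<rbrakk> \<Longrightarrow> lt (z \<otimes> x) (z \<otimes> y)"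
  using bi_ordering unfolding bi_ordering_def by blast

lemma lt_mult_right: "\<lbrakk>x \<in> carrier G; y \<in> carrier G; z \<in> carrier G; lt x y\<rbrakk> \<Longrightarrow> lt (x \<otimes> z) (y \<otimes> z)"
  using bi_ordering unfolding bi_ordering_def by blast

lemma one_lt_mult:
  assumes "u \<in> carrier G" "v \<in> carrier G" "lt \<one> u" "lt \<one> v"
  shows "lt \<one> (u \<otimes> v)"
proof -
  have "lt u (u \<otimes> v)"
    using lt_mult_left[of \<one> v u] assms by simp
  then show ?thesis
    using lt_trans assms by blast
qed

lemma one_lt_mult_inv_right:
  assumes "x \<in> carrier G" "y \<in> carrier G" "lt x y"
  shows "lt \<one> (y \<otimes> inv x)"
  using lt_mult_right[of x y "inv x"] assms by simp

lemma one_lt_inv_mult_left: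
  assumes "x \<in> carrier G" "y \<in> carrier G" "lt x y"
  shows "lt \<one> (inv x \<otimes> y)"
  using lt_mult_left[of x y "inv x"] assms by simp

lemma inv_lt_one:
  assumes "z \<in> carrier G" "lt \<one> z"
  shows "lt (inv z) \<one>"
  using lt_mult_left[of \<one> z "inv z"] assms by simp

lemma lt_conjg:
  assumes "u \<in> carrier G" "v \<in> carrier G" "g \<in> carrier G" "lt u v"
  shows "lt (conjg G u g) (conjg G v g)"
  unfolding conjg_def
  using lt_mult_left[of u v "inv g"] lt_mult_right[of "inv g \<otimes> u" "inv g \<otimes> v" g] assms by simp

lemma one_lt_conjg:
  assumes "a \<in> carrier G" "g \<in> carrier G" "lt \<one> a"
  shows "lt \<one> (conjg G a g)"
  using lt_conjg[of \<one> a g] conjg_one[OF is_group] assms by simp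

lemma one_lt_mult_inv_mult:
  assumes carr: "a \<in> carrier G" "x \<in> carrier G" "y \<in> carrier G"
    and pos: "lt \<one> a" "lt \<one> y"
    and step: "lt a x \<Longrightarrow> lt x y"
  shows "lt \<one> (y \<otimes> inv x \<otimes> a)" and "lt \<one> (a \<otimes> inv x \<otimes> y)"
proof -
  consider "x = a" | "lt x a" | "lt a x"
    using lt_trichotomy carr by blast
  then have "lt \<one> (y \<otimes> inv x \<otimes> a) \<and> lt \<one> (a \<otimes> inv x \<otimes> y)"
  proof cases
    case 1
    then show ?thesis using pos carr by (simp add: m_assoc)
  next
    case 2
    then show ?thesis
      using one_lt_mult[of y "inv x \<otimes> a"] one_lt_mult[of "a \<otimes> inv x" y]
        one_lt_inv_mult_left[of x a] one_lt_mult_inv_right[of x a] pos carr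
      by (simp add: m_assoc)
  next
    case 3
    then have "lt x y" by (rule step)
    then show ?thesis
      using one_lt_mult[of "y \<otimes> inv x" a] one_lt_mult[of a "inv x \<otimes> y"]
        one_lt_inv_mult_left[of x y] one_lt_mult_inv_right[of x y] pos carr
      by (simp add: m_assoc)
  qed
  then show "lt \<one> (y \<otimes> inv x \<otimes> a)" and "lt \<one> (a \<otimes> inv x \<otimes> y)" by auto
qed

end

theorem mainTheorem3:
  fixes G (structure) and lt :: "'a \<Rightarrow> 'a \<Rightarrow> bool" and a b :: 'a
  assumes "group G" and "a \<in> carrier G" and "b \<in> carrier G"
    and "bi_ordering G lt"
    and "lt \<one> a"
  shows "lt \<one> (conjg G a (b \<otimes> b) \<otimes> inv (conjg G a b) \<otimes> a)
       \<and> lt (inv (conjg G a (b \<otimes> b)) \<otimes> conjg G a b \<otimes> inv a) \<one>"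
proof -
  interpret bi_ordered_group G lt
    using assms(1,4) by (simp add: bi_ordered_group_def bi_ordered_group_axioms_def)
  define x where "x = conjg G a b"
  define y where "y = conjg G x b"
  have carr: "x \<in> carrier G" "y \<in> carrier G"
    unfolding x_def y_def conjg_def using assms(2,3) by auto
  have y_eq: "conjg G a (b \<otimes> b) = y"
    unfolding y_def x_def using conjg_mult[OF is_group] assms(2,3) by simp
  have "lt \<one> x"
    unfolding x_def using one_lt_conjg assms(2,3,5) by blast
  then have "lt \<one> y"
    unfolding y_def using one_lt_conjg carr(1) assms(3) by blast
  moreover have "lt a x \<Longrightarrow> lt x y"
    unfolding y_def using lt_conjg assms(2,3) carr(1) by (simp add: x_def)
  ultimately have "lt \<one> (y \<otimes> inv x \<otimes> a)" and pos: "lt \<one> (a \<otimes> inv x \<otimes> y)"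
    using one_lt_mult_inv_mult[of a x y] assms(2,5) carr by auto
  moreover have "inv (a \<otimes> inv x \<otimes> y) = inv y \<otimes> x \<otimes> inv a"
    using assms(2) carr by (simp add: inv_mult_group m_assoc)
  ultimately show ?thesis
    using inv_lt_one[OF _ pos] assms(2) carr y_eq by (simp add: x_def)
qed

end
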